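(* Let $p\geq 0$ and let $G$ be a nearly balanced bipartite graph of order $2n-1$ with $\delta(G)\geq k$. (i) If $k=p+1$, $n\geq 2k+3$, and $\rho(G)\geq \sqrt{(n-1)^2+k}$, then $G$ is $2p$-Hamilton-biconnected. (ii) If $k\geq p+2$, $n\geq \frac{(k+2)(k-p+1)}{2}$, and $\rho(G)\geq \sqrt{n(n-k+p)+k(k-p-1)}$, then $G$ is $2p$-Hamilton-biconnected.
   Context: $\rho(G)$ is the largest eigenvalue of the adjacency matrix. A bipartite graph $G=(X,Y;E)$ is nearly balanced if $|X|=|Y|+1$; it is Hamilton-biconnected if for any two distinct $u,v\in X$ there is a Hamiltonian path with ends $u,v$. A vertex set $W$ is balanced if $|W\cap X|=|W\cap Y|$; $G$ is $2p$-Hamilton-biconnected if for every balanced $W$ with $|W|=2p$, the subgraph induced by $V(G)\setminus W$ is Hamilton-biconnected. *)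

theory Defs
  imports Complex_Main
begin

definition bipartite_graph :: "'a set \<Rightarrow> 'a set \<Rightarrow> 'a set set \<Rightarrow> bool" where
  "bipartite_graph X Y E \<longleftrightarrow> finite X \<and> finite Y \<and> X \<inter> Y = {} \<and>
     (\<forall>e\<in>E. \<exists>x\<in>X. \<exists>y\<in>Y. e = {x, y})"

definition nearly_balanced :: "'a set \<Rightarrow> 'a set \<Rightarrow> bool" where
  "nearly_balanced X Y \<longleftrightarrow> card X = card Y + 1"

definition degree :: "'a set set \<Rightarrow> 'a \<Rightarrow> nat" where
  "degree E v = card {u. {u, v} \<in> E}"

definition min_degree_ge :: "'a set \<Rightarrow> 'a set set \<Rightarrow> nat \<Rightarrow> bool" where
  "min_degree_ge V E k \<longleftrightarrow> (\<forall>v\<in>V. degree E v \<ge> k)"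

definition adj :: "'a set set \<Rightarrow> 'a \<Rightarrow> 'a \<Rightarrow> real" where
  "adj E u v = (if {u, v} \<in> E then 1 else 0)"

definition adj_eigenvalue :: "'a set \<Rightarrow> 'a set set \<Rightarrow> real \<Rightarrow> bool" where
  "adj_eigenvalue V E mu \<longleftrightarrow> (\<exists>x :: 'a \<Rightarrow> real. (\<exists>v\<in>V. x v \<noteq> 0) \<and>
     (\<forall>u\<in>V. (\<Sum>w\<in>V. adj E u w * x w) = mu * x u))"

definition spectral_radius :: "'a set \<Rightarrow> 'a set set \<Rightarrow> real" where
  "spectral_radius V E = Max {mu. adj_eigenvalue V E mu}"

definition induced_edges :: "'a set set \<Rightarrow> 'a set \<Rightarrow> 'a set set" where
  "induced_edges E S = {e \<in> E. e \<subseteq> S}"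

definition ham_path :: "'a set \<Rightarrow> 'a set set \<Rightarrow> 'a \<Rightarrow> 'a \<Rightarrow> bool" where
  "ham_path V E u v \<longleftrightarrow> (\<exists>ps. ps \<noteq> [] \<and> distinct ps \<and> set ps = V \<and>
     hd ps = u \<and> last ps = v \<and>
     (\<forall>i. i + 1 < length ps \<longrightarrow> {ps ! i, ps ! (i + 1)} \<in> E))"

definition ham_biconnected :: "'a set \<Rightarrow> 'a set \<Rightarrow> 'a set set \<Rightarrow> bool" where
  "ham_biconnected X Y E \<longleftrightarrow>
     (\<forall>u\<in>X. \<forall>v\<in>X. u \<noteq> v \<longrightarrow> ham_path (X \<union> Y) E u v)"

definition balanced_set :: "'a set \<Rightarrow> 'a set \<Rightarrow> 'a set \<Rightarrow> bool" where
  "balanced_set X Y W \<longleftrightarrow> card (W \<inter> X) = card (W \<inter> Y)"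

definition ham_biconnected_2p :: "nat \<Rightarrow> 'a set \<Rightarrow> 'a set \<Rightarrow> 'a set set \<Rightarrow> bool" where
  "ham_biconnected_2p p X Y E \<longleftrightarrow>
     (\<forall>W. W \<subseteq> X \<union> Y \<longrightarrow> balanced_set X Y W \<longrightarrow> card W = 2 * p \<longrightarrow>
        ham_biconnected (X - W) (Y - W) (induced_edges E (X \<union> Y - W)))"

end

theory Submission
  imports Defs "HOL-Analysis.Convex"
begin

text \<open>Let X, Y be the parts, with card X = n = card Y + 1. For every adjacency eigenvalue mu, the
  Cauchy--Schwarz inequality applied to the eigen-equations on both sides gives mu^2 \<le> e(G), with
  equality only if G is complete bipartite. As e(G) plus the number of non-adjacent pairs in X \<times> Y
  equals n(n - 1), each spectral hypothesis bounds the number of such non-edges: by n - k - 2 in (i)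
  and below (n - k)(k - p - 1) in (ii). Deleting a balanced set of 2p vertices creates no non-edges
  and lowers every degree by at most p. Finally a Bondy--Chvatal closure argument applies: a non-edge
  xy with d(x) + d(y) \<ge> card X + 1 may be added without affecting Hamilton-biconnectedness, since a
  Hamiltonian path through xy can be rerouted; under either bound such a pair exists as long as the
  graph is not complete bipartite, and complete nearly balanced bipartite graphs are
  Hamilton-biconnected.\<close>

section \<open>Eigenvalues of bipartite adjacency matrices\<close>

lemma exists_nonzero_solution_underdetermined:
  fixes c :: "'j \<Rightarrow> 'i \<Rightarrow> real"
  assumes "finite J" "finite I" "card J < card I"
  shows "\<exists>x. (\<exists>i\<in>I. x i \<noteq> 0) \<and> (\<forall>j\<in>J. (\<Sum>i\<in>I. c j i * x i) = 0)"
  using assms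
proof (induction J arbitrary: I c rule: finite_induct)
  case empty
  then obtain i where "i \<in> I" by (metis card.empty card_gt_0_iff ex_in_conv)
  then show ?case by (intro exI[of _ "\<lambda>_. 1"]) auto
next
  case (insert j0 J I c)
  show ?case
  proof (cases "\<forall>i\<in>I. c j0 i = 0")
    case True
    from insert.IH[of I c] insert.prems insert.hyps obtain x where
      x: "\<exists>i\<in>I. x i \<noteq> 0" "\<forall>j\<in>J. (\<Sum>i\<in>I. c j i * x i) = 0" by auto
    show ?thesis using x True by (intro exI[of _ x]) auto
  next
    case False
    then obtain i0 where i0: "i0 \<in> I" "c j0 i0 \<noteq> 0" by auto
    \<comment> \<open>Gaussian elimination: solve equation j0 for the unknown i0.\<close>
    define c' where "c' = (\<lambda>j i. c j i - c j i0 / c j0 i0 * c j0 i)"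
    have "card J < card (I - {i0})" using insert.prems insert.hyps i0 by auto
    from insert.IH[OF _ this, of c'] insert.prems obtain y where
      y: "\<exists>i\<in>I-{i0}. y i \<noteq> 0" "\<forall>j\<in>J. (\<Sum>i\<in>I-{i0}. c' j i * y i) = 0" by auto
    define x where "x = y(i0 := - (\<Sum>i\<in>I-{i0}. c j0 i * y i) / c j0 i0)"
    have sx: "(\<Sum>i\<in>I. c j i * x i) = c j i0 * x i0 + (\<Sum>i\<in>I-{i0}. c j i * y i)" for j
      using insert.prems i0 by (simp add: sum.remove[of I i0] x_def)
    have e0: "(\<Sum>i\<in>I. c j0 i * x i) = 0" using i0 by (simp add: sx) (simp add: x_def)
    have "(\<Sum>i\<in>I. c j i * x i) = 0" if "j \<in> J" for j
    proof -
      have "(\<Sum>i\<in>I-{i0}. c j i * y i) = (\<Sum>i\<in>I-{i0}. c' j i * y i)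
          + c j i0 / c j0 i0 * (\<Sum>i\<in>I-{i0}. c j0 i * y i)"
        by (simp add: c'_def algebra_simps sum_distrib_left sum_subtractf)
      also have "\<dots> = c j i0 / c j0 i0 * (\<Sum>i\<in>I-{i0}. c j0 i * y i)" using y that by simp
      finally show ?thesis unfolding sx[of j] using i0 by (simp add: x_def field_simps)
    qed
    moreover have "\<exists>i\<in>I. x i \<noteq> 0" using y by (auto simp: x_def)
    ultimately show ?thesis using e0 by auto
  qed
qed

lemma adj_commute: "adj E u w = adj E w u"
  by (simp add: adj_def insert_commute)

lemma adj_eigenvectors_orthogonal:
  assumes "finite V"
    and x: "\<forall>u\<in>V. (\<Sum>w\<in>V. adj E u w * x w) = mu * x u"
    and y: "\<forall>u\<in>V. (\<Sum>w\<in>V. adj E u w * y w) = nu * y u"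
    and "mu \<noteq> nu"
  shows "(\<Sum>v\<in>V. x v * y v) = 0"
proof -
  have "mu * (\<Sum>v\<in>V. x v * y v) = (\<Sum>u\<in>V. (\<Sum>w\<in>V. adj E u w * x w) * y u)"
    using x by (simp add: sum_distrib_left mult.assoc)
  also have "\<dots> = (\<Sum>u\<in>V. \<Sum>w\<in>V. adj E u w * x w * y u)"
    by (simp add: sum_distrib_right)
  also have "\<dots> = (\<Sum>w\<in>V. \<Sum>u\<in>V. adj E u w * x w * y u)"
    by (rule sum.swap)
  also have "\<dots> = (\<Sum>w\<in>V. x w * (\<Sum>u\<in>V. adj E w u * y u))"
    by (simp add: sum_distrib_left mult.commute mult.left_commute adj_commute)
  also have "\<dots> = nu * (\<Sum>v\<in>V. x v * y v)"
    using y by (simp add: sum_distrib_left mult.commute mult.left_commute)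
  finally show ?thesis using assms(4) by (metis mult_right_cancel mult.commute)
qed

lemma adj_eigenvectors_independent:
  assumes V: "finite V" and T: "finite T" and mu0: "mu0 \<in> T"
    and nonzero: "\<exists>v\<in>V. x mu0 v \<noteq> 0"
    and eig: "\<forall>mu\<in>T. \<forall>u\<in>V. (\<Sum>w\<in>V. adj E u w * x mu w) = mu * x mu u"
    and comb: "\<forall>v\<in>V. (\<Sum>mu\<in>T. c mu * x mu v) = 0"
  shows "c mu0 = 0"
proof -
  have orth: "(\<Sum>v\<in>V. x mu0 v * x mu v) = 0" if "mu \<in> T - {mu0}" for mu
    using adj_eigenvectors_orthogonal[OF V] eig mu0 that by blast
  have "0 = (\<Sum>v\<in>V. x mu0 v * (\<Sum>mu\<in>T. c mu * x mu v))" using comb by simp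
  also have "\<dots> = (\<Sum>mu\<in>T. c mu * (\<Sum>v\<in>V. x mu0 v * x mu v))"
    by (simp add: sum_distrib_left sum.swap[of _ V] mult.commute mult.left_commute)
  also have "\<dots> = c mu0 * (\<Sum>v\<in>V. x mu0 v * x mu0 v)"
    using mu0 T orth by (simp add: sum.remove)
  finally have "c mu0 * (\<Sum>v\<in>V. x mu0 v * x mu0 v) = 0" ..
  moreover have "(\<Sum>v\<in>V. x mu0 v * x mu0 v) > 0"
    using nonzero V by (auto intro!: sum_pos2 simp: zero_less_mult_iff linorder_neq_iff)
  ultimately show ?thesis by simp
qed

lemma finite_adj_eigenvalues:
  assumes V: "finite V"
  shows "finite {mu. adj_eigenvalue V E mu}"
proof (rule ccontr)
  assume "infinite {mu. adj_eigenvalue V E mu}"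
  then obtain T where T: "T \<subseteq> {mu. adj_eigenvalue V E mu}" "finite T" "card T = card V + 1"
    using infinite_arbitrarily_large by blast
  then have ex: "\<forall>mu\<in>T. \<exists>x. (\<exists>v\<in>V. x v \<noteq> 0) \<and> (\<forall>u\<in>V. (\<Sum>w\<in>V. adj E u w * x w) = mu * x u)"
    unfolding adj_eigenvalue_def by blast
  then obtain x where x: "\<forall>mu\<in>T. (\<exists>v\<in>V. x mu v \<noteq> 0)
      \<and> (\<forall>u\<in>V. (\<Sum>w\<in>V. adj E u w * x mu w) = mu * x mu u)"
    using bchoice[OF ex] by blast
  have "card V < card T" using T by simp
  from exists_nonzero_solution_underdetermined[OF V T(2) this, of "\<lambda>v mu. x mu v"]
  obtain c where c: "\<exists>mu\<in>T. c mu \<noteq> 0" "\<forall>v\<in>V. (\<Sum>mu\<in>T. c mu * x mu v) = 0"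
    by (auto simp: mult.commute)
  then obtain mu0 where mu0: "mu0 \<in> T" "c mu0 \<noteq> 0" by blast
  have "c mu0 = 0"
    by (rule adj_eigenvectors_independent[OF V T(2) mu0(1)]) (use x c(2) mu0(1) in auto)
  with mu0 show False by simp
qed

lemma bipartite_same_side_not_edge:
  assumes "bipartite_graph X Y E"
  shows "u \<in> X \<Longrightarrow> w \<in> X \<Longrightarrow> {u, w} \<notin> E" and "u \<in> Y \<Longrightarrow> w \<in> Y \<Longrightarrow> {u, w} \<notin> E"
  using assms unfolding bipartite_graph_def by (metis disjoint_iff doubleton_eq_iff)+

lemma bipartite_adj_sum:
  assumes G: "bipartite_graph X Y E"
  shows "u \<in> X \<Longrightarrow> (\<Sum>w\<in>X \<union> Y. adj E u w * x w) = (\<Sum>w\<in>Y. adj E u w * x w)"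
    and "u \<in> Y \<Longrightarrow> (\<Sum>w\<in>X \<union> Y. adj E u w * x w) = (\<Sum>w\<in>X. adj E u w * x w)"
proof -
  have fin: "finite X" "finite Y" "X \<inter> Y = {}" using G unfolding bipartite_graph_def by auto
  then have sum_split: "(\<Sum>w\<in>X \<union> Y. adj E u w * x w)
      = (\<Sum>w\<in>X. adj E u w * x w) + (\<Sum>w\<in>Y. adj E u w * x w)"
    by (simp add: sum.union_disjoint)
  show "u \<in> X \<Longrightarrow> (\<Sum>w\<in>X \<union> Y. adj E u w * x w) = (\<Sum>w\<in>Y. adj E u w * x w)"
    using bipartite_same_side_not_edge(1)[OF G] unfolding sum_split by (auto simp: adj_def intro!: sum.neutral)
  show "u \<in> Y \<Longrightarrow> (\<Sum>w\<in>X \<union> Y. adj E u w * x w) = (\<Sum>w\<in>X. adj E u w * x w)"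
    using bipartite_same_side_not_edge(2)[OF G] unfolding sum_split by (auto simp: adj_def intro!: sum.neutral)
qed

lemma bipartite_adj_eigenvalue_zero:
  assumes G: "bipartite_graph X Y E" and c: "card Y < card X"
  shows "adj_eigenvalue (X \<union> Y) E 0"
proof -
  have fin: "finite X" "finite Y" "X \<inter> Y = {}" using G unfolding bipartite_graph_def by auto
  from exists_nonzero_solution_underdetermined[OF fin(2,1) c, of "adj E"] obtain x where
    x: "\<exists>i\<in>X. x i \<noteq> 0" "\<forall>j\<in>Y. (\<Sum>i\<in>X. adj E j i * x i) = 0" by auto
  define z where "z = (\<lambda>w. if w \<in> X then x w else 0)"
  have "(\<Sum>w\<in>X \<union> Y. adj E u w * z w) = 0" if "u \<in> X \<union> Y" for u
  proof (cases "u \<in> X")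
    case True
    have "(\<Sum>w\<in>Y. adj E u w * z w) = 0"
      using fin(3) by (auto simp: z_def intro!: sum.neutral)
    then show ?thesis using bipartite_adj_sum(1)[OF G True] by simp
  next
    case False
    then show ?thesis using bipartite_adj_sum(2)[OF G, of u z] x that by (simp add: z_def)
  qed
  moreover have "\<exists>v\<in>X \<union> Y. z v \<noteq> 0" using x by (auto simp: z_def)
  ultimately show ?thesis unfolding adj_eigenvalue_def by (intro exI[of _ z]) auto
qed

text \<open>The eigenvalue 0 guarantees that the maximum defining the spectral radius is taken over a
  nonempty set.\<close>

lemma spectral_radius_is_adj_eigenvalue:
  assumes G: "bipartite_graph X Y E" and c: "card Y < card X"
  shows "adj_eigenvalue (X \<union> Y) E (spectral_radius (X \<union> Y) E)"
proof -
  have "finite {mu. adj_eigenvalue (X \<union> Y) E mu}"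
    using G by (intro finite_adj_eigenvalues) (simp add: bipartite_graph_def)
  then show ?thesis
    using bipartite_adj_eigenvalue_zero[OF G c] unfolding spectral_radius_def
    by (metis Max_in empty_iff mem_Collect_eq)
qed

lemma sq_sum_indicator_le:
  fixes a x :: "'a \<Rightarrow> real"
  assumes a01: "\<forall>w. a w = 0 \<or> a w = 1"
  shows "(\<Sum>w\<in>Q. a w * x w)^2 \<le> (\<Sum>w\<in>Q. a w) * (\<Sum>w\<in>Q. a w * (x w)^2)"
proof -
  have aa: "a w * a w = a w" for w using a01 by (metis mult_1 mult_zero_left)
  have "(\<Sum>w\<in>Q. a w * x w) = (\<Sum>w\<in>Q. a w * (a w * x w))"
    by (simp add: mult.assoc[symmetric] aa)
  also have "(\<dots>)^2 \<le> (\<Sum>w\<in>Q. (a w)^2) * (\<Sum>w\<in>Q. (a w * x w)^2)"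
    by (rule Cauchy_Schwarz_ineq_sum)
  also have "(\<Sum>w\<in>Q. (a w)^2) = (\<Sum>w\<in>Q. a w)"
    by (simp add: power2_eq_square aa)
  also have "(\<Sum>w\<in>Q. (a w * x w)^2) = (\<Sum>w\<in>Q. a w * (x w)^2)"
    by (intro sum.cong refl) (metis aa mult.assoc mult.commute power2_eq_square)
  finally show ?thesis .
qed

lemma sum_indicator_sq_le:
  fixes a x :: "'a \<Rightarrow> real"
  assumes a01: "\<forall>w. a w = 0 \<or> a w = 1"
  shows "(\<Sum>w\<in>Q. a w * (x w)^2) \<le> (\<Sum>w\<in>Q. (x w)^2)"
  using a01 by (intro sum_mono) (metis mult_1 mult_zero_left order_refl zero_le_power2)

lemma sq_sum_indicator_eq_imp_supported:
  fixes a x :: "'a \<Rightarrow> real"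
  assumes Q: "finite Q" and a01: "\<forall>w. a w = 0 \<or> a w = 1" and d: "(\<Sum>w\<in>Q. a w) \<ge> 1"
    and eq: "(\<Sum>w\<in>Q. a w) * (\<Sum>w\<in>Q. (x w)^2) \<le> (\<Sum>w\<in>Q. a w * x w)^2"
  shows "\<forall>w\<in>Q. a w = 0 \<longrightarrow> x w = 0"
proof -
  have "(\<Sum>w\<in>Q. a w) * (\<Sum>w\<in>Q. (x w)^2) \<le> (\<Sum>w\<in>Q. a w) * (\<Sum>w\<in>Q. a w * (x w)^2)"
    using eq sq_sum_indicator_le[OF a01] by (rule order_trans)
  then have "(\<Sum>w\<in>Q. (x w)^2) \<le> (\<Sum>w\<in>Q. a w * (x w)^2)" using d by simp
  then have "(\<Sum>w\<in>Q. (1 - a w) * (x w)^2) = 0"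
    using sum_indicator_sq_le[OF a01, where Q=Q and x=x] by (simp add: algebra_simps sum_subtractf)
  moreover have "\<forall>w\<in>Q. (1 - a w) * (x w)^2 \<ge> 0"
  proof
    fix w
    have "1 - a w \<ge> 0" using a01[rule_format, of w] by auto
    then show "(1 - a w) * (x w)^2 \<ge> 0" by simp
  qed
  ultimately have "\<forall>w\<in>Q. (1 - a w) * (x w)^2 = 0" by (simp add: sum_nonneg_eq_0_iff[OF Q])
  then show ?thesis by auto
qed

context
  fixes P Q :: "'a set" and a :: "'a \<Rightarrow> 'a \<Rightarrow> real" and x :: "'a \<Rightarrow> real" and mu :: real
  assumes fin: "finite P" "finite Q"
    and a01: "\<forall>u w. a u w = 0 \<or> a u w = 1"
    and eq: "\<forall>u\<in>P. mu * x u = (\<Sum>w\<in>Q. a u w * x w)"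
begin

lemma eigen_side_pointwise_le:
  "u \<in> P \<Longrightarrow> mu^2 * (x u)^2 \<le> (\<Sum>w\<in>Q. a u w) * (\<Sum>w\<in>Q. (x w)^2)"
proof -
  assume u: "u \<in> P"
  have "(\<Sum>w\<in>Q. a u w) \<ge> 0" using a01 by (metis order_refl sum_nonneg zero_le_one)
  then have "(\<Sum>w\<in>Q. a u w) * (\<Sum>w\<in>Q. a u w * (x w)^2) \<le> (\<Sum>w\<in>Q. a u w) * (\<Sum>w\<in>Q. (x w)^2)"
    using a01 by (intro mult_left_mono sum_indicator_sq_le) auto
  moreover have "mu^2 * (x u)^2 = (\<Sum>w\<in>Q. a u w * x w)^2"
    using eq u by (simp flip: power_mult_distrib)
  ultimately show ?thesis using sq_sum_indicator_le[where a="a u" and Q=Q and x=x] a01 by auto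
qed

lemma eigen_side_le:
  "mu^2 * (\<Sum>u\<in>P. (x u)^2) \<le> (\<Sum>w\<in>Q. (x w)^2) * (\<Sum>u\<in>P. \<Sum>w\<in>Q. a u w)"
proof -
  have "mu^2 * (\<Sum>u\<in>P. (x u)^2) = (\<Sum>u\<in>P. mu^2 * (x u)^2)" by (simp add: sum_distrib_left)
  also have "\<dots> \<le> (\<Sum>u\<in>P. (\<Sum>w\<in>Q. a u w) * (\<Sum>w\<in>Q. (x w)^2))"
    using eigen_side_pointwise_le by (rule sum_mono)
  finally show ?thesis by (simp add: sum_distrib_right mult.commute)
qed

lemma eigen_side_eq_imp_supported:
  assumes equal: "mu^2 * (\<Sum>u\<in>P. (x u)^2) = (\<Sum>w\<in>Q. (x w)^2) * (\<Sum>u\<in>P. \<Sum>w\<in>Q. a u w)"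
    and S: "(\<Sum>w\<in>Q. (x w)^2) > 0" and d: "\<forall>u\<in>P. (\<Sum>w\<in>Q. a u w) \<ge> 1"
  shows "\<forall>u\<in>P. x u \<noteq> 0 \<and> (\<forall>w\<in>Q. a u w = 0 \<longrightarrow> x w = 0)"
proof
  fix u assume u: "u \<in> P"
  let ?S = "\<Sum>w\<in>Q. (x w)^2" and ?d = "\<lambda>u. \<Sum>w\<in>Q. a u w"
  have "(\<Sum>u\<in>P. ?d u * ?S - mu^2 * (x u)^2) = (\<Sum>u\<in>P. ?d u) * ?S - mu^2 * (\<Sum>u\<in>P. (x u)^2)"
    by (simp add: sum_subtractf flip: sum_distrib_left sum_distrib_right)
  also have "\<dots> = 0" using equal by (simp add: mult.commute)
  finally have "(\<Sum>u\<in>P. ?d u * ?S - mu^2 * (x u)^2) = 0" .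
  moreover have "\<forall>u\<in>P. ?d u * ?S - mu^2 * (x u)^2 \<ge> 0" using eigen_side_pointwise_le by simp
  ultimately have "\<forall>u\<in>P. ?d u * ?S - mu^2 * (x u)^2 = 0" by (simp add: sum_nonneg_eq_0_iff[OF fin(1)])
  then have pointwise: "mu^2 * (x u)^2 = ?d u * ?S" using u by simp
  have "?d u * ?S > 0" using d u S by (meson less_le_trans mult_pos_pos zero_less_one)
  then have "x u \<noteq> 0" using pointwise by auto
  moreover have "?d u * ?S \<le> (\<Sum>w\<in>Q. a u w * x w)^2"
    using pointwise eq u by (simp flip: power_mult_distrib)
  then have "\<forall>w\<in>Q. a u w = 0 \<longrightarrow> x w = 0"
    using sq_sum_indicator_eq_imp_supported[OF fin(2)] a01 d u by blast
  ultimately show "x u \<noteq> 0 \<and> (\<forall>w\<in>Q. a u w = 0 \<longrightarrow> x w = 0)" by blast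
qed

end

lemma adj_zero_or_one: "\<forall>u w. adj E u w = 0 \<or> adj E u w = 1"
  by (simp add: adj_def)

lemma bipartite_adj_eigenvector:
  assumes G: "bipartite_graph X Y E" and ev: "adj_eigenvalue (X \<union> Y) E mu"
  obtains x where "\<exists>v\<in>X \<union> Y. x v \<noteq> 0"
    "\<forall>u\<in>X. mu * x u = (\<Sum>w\<in>Y. adj E u w * x w)"
    "\<forall>u\<in>Y. mu * x u = (\<Sum>w\<in>X. adj E u w * x w)"
proof -
  from ev obtain x where x0: "\<exists>v\<in>X \<union> Y. x v \<noteq> 0"
    and xe: "\<forall>u\<in>X \<union> Y. (\<Sum>w\<in>X \<union> Y. adj E u w * x w) = mu * x u"
    unfolding adj_eigenvalue_def by auto
  have "\<forall>u\<in>X. mu * x u = (\<Sum>w\<in>Y. adj E u w * x w)"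
    using xe bipartite_adj_sum(1)[OF G] by (metis UnI1)
  moreover have "\<forall>u\<in>Y. mu * x u = (\<Sum>w\<in>X. adj E u w * x w)"
    using xe bipartite_adj_sum(2)[OF G] by (metis UnI2)
  ultimately show thesis using that[OF x0] by blast
qed

lemma bipartite_eigenvector_norms:
  assumes fin: "finite X" "finite Y" and x0: "\<exists>v\<in>X \<union> Y. x v \<noteq> 0"
    and eqX: "\<forall>u\<in>X. mu * x u = (\<Sum>w\<in>Y. adj E u w * x w)"
    and eqY: "\<forall>u\<in>Y. mu * x u = (\<Sum>w\<in>X. adj E u w * x w)"
    and mu: "mu \<noteq> 0"
  shows "(\<Sum>u\<in>X. (x u)^2) = (\<Sum>u\<in>Y. (x u)^2)" and "(\<Sum>u\<in>Y. (x u)^2) > 0"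
proof -
  have "mu * (\<Sum>u\<in>X. (x u)^2) = (\<Sum>u\<in>X. x u * (mu * x u))"
    by (simp add: sum_distrib_left power2_eq_square mult.commute mult.left_commute)
  also have "\<dots> = (\<Sum>u\<in>X. \<Sum>w\<in>Y. x u * adj E u w * x w)"
    using eqX by (simp add: sum_distrib_left mult.assoc)
  also have "\<dots> = (\<Sum>w\<in>Y. \<Sum>u\<in>X. x w * adj E w u * x u)"
    by (subst sum.swap) (simp add: adj_commute mult.commute mult.left_commute)
  also have "\<dots> = (\<Sum>w\<in>Y. x w * (mu * x w))"
    using eqY by (simp add: sum_distrib_left mult.assoc)
  also have "\<dots> = mu * (\<Sum>u\<in>Y. (x u)^2)"
    by (simp add: sum_distrib_left power2_eq_square mult.commute mult.left_commute)
  finally show balanced: "(\<Sum>u\<in>X. (x u)^2) = (\<Sum>u\<in>Y. (x u)^2)" using mu by simp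
  show "(\<Sum>u\<in>Y. (x u)^2) > 0"
  proof (rule ccontr)
    assume "\<not> (\<Sum>u\<in>Y. (x u)^2) > 0"
    then have "(\<Sum>u\<in>Y. (x u)^2) = 0" "(\<Sum>u\<in>X. (x u)^2) = 0"
      using balanced by (simp_all add: sum_nonneg leD order.antisym)
    then show False using x0 fin by (auto simp: sum_nonneg_eq_0_iff)
  qed
qed

lemma bipartite_adj_eigenvalue_sq_le:
  assumes G: "bipartite_graph X Y E" and ev: "adj_eigenvalue (X \<union> Y) E mu"
  shows "mu^2 \<le> (\<Sum>u\<in>X. \<Sum>w\<in>Y. adj E u w)"
proof (cases "mu = 0")
  case True
  then show ?thesis by (simp add: sum_nonneg adj_def)
next
  case False
  have fin: "finite X" "finite Y" using G by (auto simp: bipartite_graph_def)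
  obtain x where x: "\<exists>v\<in>X \<union> Y. x v \<noteq> 0"
    and eqX: "\<forall>u\<in>X. mu * x u = (\<Sum>w\<in>Y. adj E u w * x w)"
    and eqY: "\<forall>u\<in>Y. mu * x u = (\<Sum>w\<in>X. adj E u w * x w)"
    using bipartite_adj_eigenvector[OF G ev] .
  note norms = bipartite_eigenvector_norms[OF fin x eqX eqY False]
  show ?thesis
    using eigen_side_le[OF fin adj_zero_or_one eqX] norms by (simp add: mult.commute)
qed

lemma bipartite_adj_eigenvalue_sq_eq_imp_complete:
  assumes G: "bipartite_graph X Y E" and ev: "adj_eigenvalue (X \<union> Y) E mu"
    and equal: "mu^2 = (\<Sum>u\<in>X. \<Sum>w\<in>Y. adj E u w)"
    and degX: "\<forall>u\<in>X. (\<Sum>w\<in>Y. adj E u w) \<ge> 1" and degY: "\<forall>w\<in>Y. (\<Sum>u\<in>X. adj E w u) \<ge> 1"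
  shows "\<forall>u\<in>X. \<forall>w\<in>Y. {u, w} \<in> E"
proof (cases "X = {}")
  case False
  have fin: "finite X" "finite Y" using G by (auto simp: bipartite_graph_def)
  have "(\<Sum>u\<in>X. \<Sum>w\<in>Y. adj E u w) \<ge> (\<Sum>u\<in>X. 1)" using degX by (intro sum_mono) auto
  then have "mu \<noteq> 0" using equal False fin by auto
  obtain x where x: "\<exists>v\<in>X \<union> Y. x v \<noteq> 0"
    and eqX: "\<forall>u\<in>X. mu * x u = (\<Sum>w\<in>Y. adj E u w * x w)"
    and eqY: "\<forall>u\<in>Y. mu * x u = (\<Sum>w\<in>X. adj E u w * x w)"
    using bipartite_adj_eigenvector[OF G ev] .
  note norms = bipartite_eigenvector_norms[OF fin x eqX eqY \<open>mu \<noteq> 0\<close>]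
  have swap: "(\<Sum>w\<in>Y. \<Sum>u\<in>X. adj E w u) = (\<Sum>u\<in>X. \<Sum>w\<in>Y. adj E u w)"
    by (subst sum.swap) (simp add: adj_commute)
  have "\<forall>u\<in>X. \<forall>w\<in>Y. adj E u w = 0 \<longrightarrow> x w = 0"
    using eigen_side_eq_imp_supported[OF fin adj_zero_or_one eqX] equal norms degX
    by (simp add: mult.commute)
  moreover have "\<forall>w\<in>Y. x w \<noteq> 0"
    using eigen_side_eq_imp_supported[OF fin(2,1) adj_zero_or_one eqY] equal norms degY swap
    by (simp add: mult.commute)
  ultimately show ?thesis by (auto simp: adj_def split: if_splits)
qed simp

section \<open>Hamiltonian paths in nearly balanced bipartite graphs\<close>

definition edges_between :: "'a set \<Rightarrow> 'a set \<Rightarrow> 'a set set \<Rightarrow> bool" where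
  "edges_between A B F \<longleftrightarrow> (\<forall>e\<in>F. \<exists>x\<in>A. \<exists>y\<in>B. e = {x, y})"

definition degree_in :: "'a set set \<Rightarrow> 'a set \<Rightarrow> 'a \<Rightarrow> nat" where
  "degree_in F S v = card {w\<in>S. {v, w} \<in> F}"

definition non_edges :: "'a set set \<Rightarrow> 'a set \<Rightarrow> 'a set \<Rightarrow> ('a \<times> 'a) set" where
  "non_edges F A B = {(a, b). a \<in> A \<and> b \<in> B \<and> {a, b} \<notin> F}"

lemma edges_between_other_side:
  assumes "edges_between A B F" "A \<inter> B = {}" "{u, w} \<in> F"
  shows "u \<in> A \<Longrightarrow> w \<in> B" and "u \<in> B \<Longrightarrow> w \<in> A"
  using assms unfolding edges_between_def by (metis disjoint_iff doubleton_eq_iff)+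

lemma edges_between_insert:
  "edges_between A B F \<Longrightarrow> x \<in> A \<Longrightarrow> y \<in> B \<Longrightarrow> edges_between A B (insert {x, y} F)"
  unfolding edges_between_def by auto

abbreviation walk_in :: "'a set set \<Rightarrow> 'a list \<Rightarrow> bool" where
  "walk_in F \<equiv> successively (\<lambda>u v. {u, v} \<in> F)"

lemma successively_iff_nth:
  "successively P xs \<longleftrightarrow> (\<forall>i. i + 1 < length xs \<longrightarrow> P (xs ! i) (xs ! (i + 1)))"
proof (induction P xs rule: successively.induct)
  case (3 P x y xs)
  then show ?case by (auto simp: nth_Cons split: nat.splits)
qed auto

lemma walk_in_rev [simp]: "walk_in F (rev ps) \<longleftrightarrow> walk_in F ps"
  by (simp add: insert_commute)

lemma ham_path_iff_walk_in:
  "ham_path V F u v \<longleftrightarrow>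
     (\<exists>ps. ps \<noteq> [] \<and> distinct ps \<and> set ps = V \<and> hd ps = u \<and> last ps = v \<and> walk_in F ps)"
  unfolding ham_path_def successively_iff_nth by blast

lemma ham_path_sym: "ham_path V F u v \<Longrightarrow> ham_path V F v u"
  unfolding ham_path_iff_walk_in
  by (metis distinct_rev hd_rev last_rev rev_is_Nil_conv set_rev walk_in_rev)

lemma walk_in_reverse_segment:
  assumes "walk_in F (xs @ [a])" "walk_in F ms" "walk_in F (b # ys)" "ms \<noteq> []"
    and "{a, last ms} \<in> F" "{hd ms, b} \<in> F"
  shows "walk_in F (xs @ a # rev ms @ b # ys)"
proof -
  have "walk_in F (rev ms)" using assms(2) by (rule walk_in_rev[THEN iffD2])
  then show ?thesis
    using assms by (auto simp: successively_append_iff successively_Cons hd_rev last_rev)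
qed

lemma walk_in_take:
  assumes "\<forall>m. m + 1 < k \<longrightarrow> {ps ! m, ps ! (m + 1)} \<in> F"
  shows "walk_in F (take k ps)"
  using assms by (auto simp: successively_iff_nth)

lemma walk_in_drop:
  assumes "\<forall>m. k \<le> m \<and> m + 1 < length ps \<longrightarrow> {ps ! m, ps ! (m + 1)} \<in> F"
  shows "walk_in F (drop k ps)"
  using assms by (auto simp: successively_iff_nth add.commute)

lemma split_list_at_two_positions:
  assumes "s < t" "t < length ps"
  shows "ps = take s ps @ ps ! s # take (t - Suc s) (drop (Suc s) ps) @ ps ! t # drop (Suc t) ps"
proof -
  have "ps = take s ps @ ps ! s # drop (Suc s) ps"
    using assms by (intro id_take_nth_drop) simp
  also have "drop (Suc s) ps = take (t - Suc s) (drop (Suc s) ps) @ drop (t - Suc s) (drop (Suc s) ps)"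
    by (rule append_take_drop_id[symmetric])
  also have "drop (t - Suc s) (drop (Suc s) ps) = ps ! t # drop (Suc t) ps"
    using assms by (simp add: Cons_nth_drop_Suc)
  finally show ?thesis .
qed

lemma ham_path_reverse_segment:
  assumes "distinct (L @ a # M @ b # R)" "walk_in F (L @ a # rev M @ b # R)"
  shows "ham_path (set (L @ a # M @ b # R)) F (hd (L @ a # M @ b # R)) (last (L @ a # M @ b # R))"
  unfolding ham_path_iff_walk_in using assms
  by (intro exI[of _ "L @ a # rev M @ b # R"]) (auto simp: hd_append last_append)

lemma ham_path_two_opt:
  assumes dist: "distinct ps" and st: "s + 1 < t" "t + 1 < length ps"
    and walk: "\<forall>m. m + 1 < length ps \<and> m \<noteq> s \<and> m \<noteq> t \<longrightarrow> {ps ! m, ps ! (m + 1)} \<in> F"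
    and chord1: "{ps ! s, ps ! t} \<in> F" and chord2: "{ps ! (s + 1), ps ! (t + 1)} \<in> F"
  shows "ham_path (set ps) F (hd ps) (last ps)"
proof -
  define L where "L = take s ps"
  define M where "M = take (t - s) (drop (Suc s) ps)"
  define R where "R = drop (Suc (Suc t)) ps"
  define a where "a = ps ! s"
  define b where "b = ps ! (t + 1)"
  have decomp: "ps = L @ a # M @ b # R"
    using split_list_at_two_positions[of s "t + 1" ps] st by (simp add: L_def M_def R_def a_def b_def)
  have M: "M \<noteq> []" "hd M = ps ! (s + 1)" "last M = ps ! t"
    using st by (auto simp: M_def hd_conv_nth last_conv_nth)
  have "walk_in F (L @ [a])"
    unfolding L_def a_def using st walk
    by (auto simp: take_Suc_conv_app_nth[symmetric] intro!: walk_in_take)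
  moreover have "walk_in F M"
  proof -
    have "{ps ! Suc (s + i), ps ! Suc (Suc (s + i))} \<in> F" if "Suc i < t - s" for i
      using st that walk[rule_format, of "Suc (s + i)"] by fastforce
    then show ?thesis by (auto simp: M_def successively_iff_nth)
  qed
  moreover have "walk_in F (b # R)"
    unfolding R_def b_def using st walk by (auto simp: Cons_nth_drop_Suc intro!: walk_in_drop)
  ultimately have "walk_in F (L @ a # rev M @ b # R)"
    using M chord1 chord2 unfolding a_def b_def
    by (intro walk_in_reverse_segment) (auto simp: insert_commute)
  then have "ham_path (set (L @ a # M @ b # R)) F (hd (L @ a # M @ b # R)) (last (L @ a # M @ b # R))"
    using dist decomp by (intro ham_path_reverse_segment) simp_all
  then show ?thesis unfolding decomp[symmetric] .
qed

lemma walk_in_insert_other_positions: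
  assumes dist: "distinct ps" and walk: "walk_in (insert {x, y} F) ps"
    and i: "i + 1 < length ps" "ps ! i = x" "ps ! (i + 1) = y"
  shows "\<forall>m. m + 1 < length ps \<and> m \<noteq> i \<longrightarrow> {ps ! m, ps ! (m + 1)} \<in> F"
proof (intro allI impI)
  fix m assume m: "m + 1 < length ps \<and> m \<noteq> i"
  have same: "a = b" if "a < length ps" "b < length ps" "ps ! a = ps ! b" for a b
    using that dist by (simp add: nth_eq_iff_index_eq)
  have "{ps ! m, ps ! (m + 1)} \<noteq> {x, y}"
  proof
    assume "{ps ! m, ps ! (m + 1)} = {x, y}"
    then have "ps ! m = ps ! i \<or> ps ! m = ps ! (i + 1) \<and> ps ! (m + 1) = ps ! i"
      using i by (auto simp: doubleton_eq_iff)
    then show False using same[of m i] same[of m "i + 1"] same[of "m + 1" i] m i by auto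
  qed
  then show "{ps ! m, ps ! (m + 1)} \<in> F" using walk m by (auto simp: successively_iff_nth)
qed

lemma card_positions:
  assumes "distinct ps"
  shows "card {m. m < length ps \<and> P (ps ! m)} = card {v\<in>set ps. P v}"
proof -
  have "{v\<in>set ps. P v} = nth ps ` {m. m < length ps \<and> P (ps ! m)}"
    by (auto simp: in_set_conv_nth)
  moreover have "inj_on (nth ps) {m. m < length ps \<and> P (ps ! m)}"
    using assms by (auto simp: inj_on_def nth_eq_iff_index_eq)
  ultimately show ?thesis by (simp add: card_image)
qed

lemma card_positions_le_succ_positions:
  "card {m. m < length ps \<and> P (ps ! m)} \<le> card {j. j + 1 < length ps \<and> P (ps ! (j + 1))} + 1"
proof -
  let ?J = "{j. j + 1 < length ps \<and> P (ps ! (j + 1))}"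
  have "{m. m < length ps \<and> P (ps ! m)} \<subseteq> insert 0 (Suc ` ?J)"
  proof
    fix m assume m: "m \<in> {m. m < length ps \<and> P (ps ! m)}"
    show "m \<in> insert 0 (Suc ` ?J)"
    proof (cases m)
      case (Suc j)
      then show ?thesis using m by auto
    qed simp
  qed
  moreover have "finite ?J" by (rule finite_subset[of _ "{..<length ps}"]) auto
  ultimately have "card {m. m < length ps \<and> P (ps ! m)} \<le> card (insert 0 (Suc ` ?J))"
    by (intro card_mono) auto
  also have "\<dots> \<le> card ?J + 1"
    using \<open>finite ?J\<close> by (simp add: card_insert_if card_image)
  finally show ?thesis .
qed

text \<open>The pigeonhole step of the Bondy--Chvatal argument: the positions of B-vertices on the
  path cannot hold both the neighbours of x and the predecessors of the neighbours of y
  without overlap.\<close>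

lemma rotation_position_exists:
  assumes fin: "finite A" "finite B" and disj: "A \<inter> B = {}" and card: "card A = card B + 1"
    and bip: "edges_between A B F" and x: "x \<in> A" and y: "y \<in> B"
    and deg: "degree_in F B x + degree_in F A y \<ge> card A + 1"
    and dist: "distinct ps" and set_ps: "set ps = A \<union> B"
    and walk: "walk_in (insert {x, y} F) ps"
  obtains j where "j + 1 < length ps" "{x, ps ! j} \<in> F" "{y, ps ! (j + 1)} \<in> F"
proof -
  let ?n = "length ps"
  define Bpos where "Bpos = {m. m < ?n \<and> ps ! m \<in> B}"
  define I where "I = {m. m < ?n \<and> {x, ps ! m} \<in> F}"
  define J where "J = {j. j + 1 < ?n \<and> {y, ps ! (j + 1)} \<in> F}"
  have "{v\<in>A \<union> B. v \<in> B} = B" by auto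
  then have card_Bpos: "card Bpos = card B"
    using card_positions[OF dist, of "\<lambda>v. v \<in> B"] unfolding Bpos_def set_ps by simp
  have "{v\<in>A \<union> B. {x, v} \<in> F} = {v\<in>B. {x, v} \<in> F}"
    using edges_between_other_side(1)[OF bip disj] x by blast
  then have card_I: "card I = degree_in F B x"
    using card_positions[OF dist, of "\<lambda>v. {x, v} \<in> F"] unfolding I_def set_ps degree_in_def
    by simp
  have I_Bpos: "I \<subseteq> Bpos"
    using edges_between_other_side(1)[OF bip disj] x by (auto simp: I_def Bpos_def)
  have "{v\<in>A \<union> B. {y, v} \<in> F} = {v\<in>A. {y, v} \<in> F}"
    using edges_between_other_side(2)[OF bip disj] y by blast
  then have card_Ny: "card {m. m < ?n \<and> {y, ps ! m} \<in> F} = degree_in F A y"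
    using card_positions[OF dist, of "\<lambda>v. {y, v} \<in> F"] unfolding set_ps degree_in_def by simp
  have card_J: "degree_in F A y \<le> card J + 1"
    using card_positions_le_succ_positions[of ps "\<lambda>v. {y, v} \<in> F"] unfolding card_Ny J_def .
  have J_Bpos: "J \<subseteq> Bpos"
  proof
    fix j assume j: "j \<in> J"
    then have "ps ! (j + 1) \<in> A"
      using edges_between_other_side(2)[OF bip disj] y by (auto simp: J_def)
    moreover have "{ps ! (j + 1), ps ! j} \<in> insert {x, y} F"
      using walk j by (auto simp: J_def successively_iff_nth insert_commute)
    ultimately show "j \<in> Bpos"
      using edges_between_other_side(1)[OF edges_between_insert[OF bip x y] disj] j
      by (auto simp: J_def Bpos_def)
  qed
  have "finite Bpos" by (simp add: Bpos_def)
  then have "card (I \<union> J) \<le> card B"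
    using card_mono[of Bpos "I \<union> J"] I_Bpos J_Bpos card_Bpos by simp
  moreover have "card I + card J = card (I \<union> J) + card (I \<inter> J)"
    using I_Bpos J_Bpos \<open>finite Bpos\<close> by (intro card_Un_Int) (auto intro: finite_subset)
  ultimately have "I \<inter> J \<noteq> {}" using card_I card_J deg card by auto
  then show thesis using that by (auto simp: I_def J_def)
qed

lemma ham_path_delete_edge_at:
  assumes fin: "finite A" "finite B" and disj: "A \<inter> B = {}" and card: "card A = card B + 1"
    and bip: "edges_between A B F" and x: "x \<in> A" and y: "y \<in> B" and nxy: "{x, y} \<notin> F"
    and deg: "degree_in F B x + degree_in F A y \<ge> card A + 1"
    and dist: "distinct ps" and set_ps: "set ps = A \<union> B"
    and walk: "walk_in (insert {x, y} F) ps"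
    and i: "i + 1 < length ps" "ps ! i = x" "ps ! (i + 1) = y"
  shows "ham_path (A \<union> B) F (hd ps) (last ps)"
proof -
  obtain j where j: "j + 1 < length ps" "{x, ps ! j} \<in> F" "{y, ps ! (j + 1)} \<in> F"
    using rotation_position_exists[OF fin disj card bip x y deg dist set_ps walk] .
  note other = walk_in_insert_other_positions[OF dist walk i]
  have "{x, x} \<notin> F" using edges_between_other_side(1)[OF bip disj, of x x] x disj by auto
  then have "j \<noteq> i" using j i by auto
  moreover have "j \<noteq> i + 1" using j i nxy by auto
  moreover have "j + 1 \<noteq> i" using j i nxy by (auto simp: insert_commute)
  ultimately consider "i + 1 < j" | "j + 1 < i" by linarith
  then have "ham_path (set ps) F (hd ps) (last ps)"
  proof cases
    case 1
    show ?thesis by (rule ham_path_two_opt[OF dist 1 j(1)]) (use other j i in auto)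
  next
    case 2
    show ?thesis by (rule ham_path_two_opt[OF dist 2]) (use other j i in \<open>auto simp: insert_commute\<close>)
  qed
  then show ?thesis using set_ps by simp
qed

lemma ham_path_delete_edge:
  assumes fin: "finite A" "finite B" and disj: "A \<inter> B = {}" and card: "card A = card B + 1"
    and bip: "edges_between A B F" and x: "x \<in> A" and y: "y \<in> B" and nxy: "{x, y} \<notin> F"
    and deg: "degree_in F B x + degree_in F A y \<ge> card A + 1"
    and hp: "ham_path (A \<union> B) (insert {x, y} F) u v"
  shows "ham_path (A \<union> B) F u v"
proof -
  note delete_at = ham_path_delete_edge_at[OF fin disj card bip x y nxy deg]
  from hp obtain ps where ps: "ps \<noteq> []" "distinct ps" "set ps = A \<union> B" "hd ps = u" "last ps = v"
    and walk: "walk_in (insert {x, y} F) ps"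
    unfolding ham_path_iff_walk_in by blast
  show ?thesis
  proof (cases "\<exists>i. i + 1 < length ps \<and> {ps ! i, ps ! (i + 1)} = {x, y}")
    case False
    then have "walk_in F ps" using walk by (auto simp: successively_iff_nth)
    then show ?thesis using ps unfolding ham_path_iff_walk_in by blast
  next
    case True
    then obtain i where i: "i + 1 < length ps" "{ps ! i, ps ! (i + 1)} = {x, y}" by blast
    then consider "ps ! i = x" "ps ! (i + 1) = y" | "ps ! i = y" "ps ! (i + 1) = x"
      by (auto simp: doubleton_eq_iff)
    then show ?thesis
    proof cases
      case 1
      then show ?thesis using delete_at[OF ps(2,3) walk i(1)] ps by simp
    next
      case 2
      let ?k = "length ps - 2 - i"
      have "length ps - Suc ?k = i + 1" "length ps - Suc (?k + 1) = i" using i by auto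
      then have k: "?k + 1 < length (rev ps)" "rev ps ! ?k = x" "rev ps ! (?k + 1) = y"
        using 2 i by (simp_all add: rev_nth)
      have "walk_in (insert {x, y} F) (rev ps)" using walk by (rule walk_in_rev[THEN iffD2])
      then have "ham_path (A \<union> B) F v u"
        using delete_at[of "rev ps", OF _ _ _ k] ps by (simp add: hd_rev last_rev)
      then show ?thesis by (rule ham_path_sym)
    qed
  qed
qed

lemma ham_path_Cons2:
  assumes "ham_path V F z v" "u \<notin> V" "y \<notin> V" "u \<noteq> y" "{u, y} \<in> F" "{y, z} \<in> F"
  shows "ham_path (insert u (insert y V)) F u v"
proof -
  from assms(1) obtain ps where ps: "ps \<noteq> []" "distinct ps" "set ps = V" "hd ps = z" "last ps = v"
    "walk_in F ps" unfolding ham_path_iff_walk_in by blast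
  then have "walk_in F (u # y # ps)" using assms(5,6) by (simp add: successively_Cons)
  then show ?thesis unfolding ham_path_iff_walk_in using ps assms(2-4)
    by (intro exI[of _ "u # y # ps"]) auto
qed

lemma complete_bipartite_ham_path:
  assumes "finite A" "finite B" "A \<inter> B = {}" "card A = card B + 1"
    and "\<forall>a\<in>A. \<forall>b\<in>B. {a, b} \<in> F" and "u \<in> A" "v \<in> A" "u \<noteq> v \<or> B = {}"
  shows "ham_path (A \<union> B) F u v"
  using assms
proof (induction "card B" arbitrary: A B u v)
  case 0
  then obtain w where "A = {w}" "B = {}" by (auto simp: card_1_singleton_iff)
  then have "A \<union> B = {u}" "u = v" using 0 by auto
  then show ?case unfolding ham_path_iff_walk_in by (intro exI[of _ "[u]"]) auto
next
  case (Suc m)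
  then have uv: "u \<noteq> v" by auto
  obtain y where y: "y \<in> B" using Suc.hyps(2) by (metis card.empty ex_in_conv nat.distinct(1))
  obtain z where z: "z \<in> A - {u}" "z \<noteq> v \<or> B - {y} = {}"
  proof (cases "B - {y} = {}")
    case True
    then show ?thesis using that Suc.prems uv by blast
  next
    case False
    then obtain y' where "y' \<in> B" "y' \<noteq> y" by blast
    then have "card {y, y'} \<le> card B" using Suc.prems(2) y by (intro card_mono) auto
    then have "card (A - {u, v}) > 0" using Suc.prems uv \<open>y' \<noteq> y\<close> by (simp add: card_Diff_subset)
    then obtain z where "z \<in> A - {u, v}" by (metis card.empty ex_in_conv less_irrefl)
    then show ?thesis using that by blast
  qed
  have "ham_path ((A - {u}) \<union> (B - {y})) F z v"
    by (rule Suc.hyps(1)[of "B - {y}" "A - {u}" z v]) (use Suc.hyps(2) Suc.prems y z uv in auto)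
  then have "ham_path (insert u (insert y ((A - {u}) \<union> (B - {y})))) F u v"
    by (rule ham_path_Cons2) (use Suc.prems y z in \<open>auto simp: insert_commute\<close>)
  moreover have "insert u (insert y ((A - {u}) \<union> (B - {y}))) = A \<union> B" using Suc.prems y by auto
  ultimately show ?case by simp
qed

lemma finite_non_edges: "finite A \<Longrightarrow> finite B \<Longrightarrow> finite (non_edges F A B)"
  by (rule finite_subset[of _ "A \<times> B"]) (auto simp: non_edges_def)

lemma ham_biconnected_by_closure:
  assumes fin: "finite A" "finite B" and disj: "A \<inter> B = {}" and card: "card A = card B + 1"
    and step: "\<And>F. P F \<Longrightarrow> non_edges F A B \<noteq> {} \<Longrightarrow>
       \<exists>x\<in>A. \<exists>y\<in>B. {x, y} \<notin> F \<and> degree_in F B x + degree_in F A y \<ge> card A + 1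
         \<and> P (insert {x, y} F)"
  shows "edges_between A B F \<Longrightarrow> P F \<Longrightarrow> ham_biconnected A B F"
proof (induction "card (non_edges F A B)" arbitrary: F rule: less_induct)
  case less
  show ?case
  proof (cases "non_edges F A B = {}")
    case True
    then have "\<forall>a\<in>A. \<forall>b\<in>B. {a, b} \<in> F" by (auto simp: non_edges_def)
    then show ?thesis
      unfolding ham_biconnected_def by (auto intro: complete_bipartite_ham_path[OF fin disj card])
  next
    case False
    from step[OF less.prems(2) this] obtain x y where xy: "x \<in> A" "y \<in> B" "{x, y} \<notin> F"
      "degree_in F B x + degree_in F A y \<ge> card A + 1" "P (insert {x, y} F)" by blast
    let ?F = "insert {x, y} F"
    have "non_edges ?F A B = non_edges F A B - {(x, y)}"
      using xy disj by (auto simp: non_edges_def doubleton_eq_iff)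
    moreover have "(x, y) \<in> non_edges F A B" using xy by (auto simp: non_edges_def)
    ultimately have "card (non_edges ?F A B) < card (non_edges F A B)"
      using finite_non_edges[OF fin] by (metis card_Diff1_less)
    then have "ham_biconnected A B ?F"
      using edges_between_insert[OF less.prems(1) xy(1,2)] xy(5) by (rule less.hyps)
    then show ?thesis
      unfolding ham_biconnected_def
      by (auto intro: ham_path_delete_edge[OF fin disj card less.prems(1) xy(1-4)])
  qed
qed

section \<open>Degree conditions for the closure\<close>

lemma degree_in_plus_non_neighbours:
  assumes "finite S"
  shows "degree_in F S v + card {w\<in>S. {v, w} \<notin> F} = card S"
proof -
  have "{w\<in>S. {v, w} \<in> F} \<union> {w\<in>S. {v, w} \<notin> F} = S" by auto
  then show ?thesis unfolding degree_in_def using assms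
    by (metis (no_types, lifting) card_Un_disjoint disjoint_iff finite_Un mem_Collect_eq)
qed

lemma degree_in_insert_mono: "finite S \<Longrightarrow> degree_in F S v \<le> degree_in (insert e F) S v"
  unfolding degree_in_def by (rule card_mono) auto

lemma card_non_neighbours_le_non_edges:
  assumes fin: "finite A" "finite B" and xy: "(x, y) \<in> non_edges F A B"
  shows "card {w\<in>B. {x, w} \<notin> F} + card {w\<in>A. {y, w} \<notin> F} \<le> card (non_edges F A B) + 1"
proof -
  let ?S1 = "(\<lambda>w. (x, w)) ` {w\<in>B. {x, w} \<notin> F}" and ?S2 = "(\<lambda>w. (w, y)) ` {w\<in>A. {y, w} \<notin> F}"
  have "card ?S1 + card ?S2 = card (?S1 \<union> ?S2) + card (?S1 \<inter> ?S2)"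
    using fin by (intro card_Un_Int) auto
  also have "card (?S1 \<union> ?S2) \<le> card (non_edges F A B)"
    using xy finite_non_edges[OF fin] by (intro card_mono) (auto simp: non_edges_def insert_commute)
  also have "card (?S1 \<inter> ?S2) \<le> card {(x, y)}" by (intro card_mono) auto
  finally show ?thesis by (simp add: card_image inj_on_def)
qed

lemma closure_step_few_non_edges:
  assumes fin: "finite A" "finite B" and card: "card A = card B + 1"
    and few: "card (non_edges F A B) + 3 \<le> card A" and ne: "non_edges F A B \<noteq> {}"
  shows "\<exists>x\<in>A. \<exists>y\<in>B. {x, y} \<notin> F \<and> degree_in F B x + degree_in F A y \<ge> card A + 1 \<and>
     card (non_edges (insert {x, y} F) A B) + 3 \<le> card A"
proof -
  from ne obtain x y where xy: "(x, y) \<in> non_edges F A B" by auto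
  then have x: "x \<in> A" and y: "y \<in> B" and nxy: "{x, y} \<notin> F" by (auto simp: non_edges_def)
  have "degree_in F B x + degree_in F A y \<ge> card A + 1"
    using card_non_neighbours_le_non_edges[OF fin xy] degree_in_plus_non_neighbours[OF fin(2), of F x]
      degree_in_plus_non_neighbours[OF fin(1), of F y] few card by linarith
  moreover have "card (non_edges (insert {x, y} F) A B) \<le> card (non_edges F A B)"
    by (rule card_mono[OF finite_non_edges[OF fin]]) (auto simp: non_edges_def)
  then have "card (non_edges (insert {x, y} F) A B) + 3 \<le> card A" using few by linarith
  ultimately show ?thesis using x y nxy by blast
qed

lemma card_mult_le_non_edges:
  assumes fin: "finite A" "finite B"
  shows "S \<subseteq> A \<Longrightarrow> \<forall>v\<in>S. c \<le> card {w\<in>B. {v, w} \<notin> F} \<Longrightarrow> card S * c \<le> card (non_edges F A B)"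
    and "S \<subseteq> B \<Longrightarrow> \<forall>w\<in>S. c \<le> card {v\<in>A. {w, v} \<notin> F} \<Longrightarrow> card S * c \<le> card (non_edges F A B)"
proof -
  assume S: "S \<subseteq> A" and c: "\<forall>v\<in>S. c \<le> card {w\<in>B. {v, w} \<notin> F}"
  have "finite S" using S fin finite_subset by blast
  then have "card S * c \<le> (\<Sum>v\<in>S. card {w\<in>B. {v, w} \<notin> F})"
    using c sum_mono[of S "\<lambda>_. c"] by simp
  also have "\<dots> = card (SIGMA v:S. {w\<in>B. {v, w} \<notin> F})"
    using \<open>finite S\<close> fin by (simp add: card_SigmaI)
  also have "\<dots> \<le> card (non_edges F A B)"
    using S by (intro card_mono finite_non_edges fin) (auto simp: non_edges_def)
  finally show "card S * c \<le> card (non_edges F A B)" .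
next
  assume S: "S \<subseteq> B" and c: "\<forall>w\<in>S. c \<le> card {v\<in>A. {w, v} \<notin> F}"
  have "finite S" using S fin finite_subset by blast
  then have "card S * c \<le> (\<Sum>w\<in>S. card {v\<in>A. {w, v} \<notin> F})"
    using c sum_mono[of S "\<lambda>_. c"] by simp
  also have "\<dots> = card (prod.swap ` (SIGMA w:S. {v\<in>A. {w, v} \<notin> F}))"
    using \<open>finite S\<close> fin by (simp add: card_SigmaI card_image)
  also have "\<dots> \<le> card (non_edges F A B)"
    using S by (intro card_mono finite_non_edges fin) (auto simp: non_edges_def insert_commute)
  finally show "card S * c \<le> card (non_edges F A B)" .
qed

lemma diff_mult_pred_le:
  fixes a d t :: nat
  assumes "d \<le> t" "t + d + 1 \<le> a"
  shows "(a - d) * (d - 1) \<le> (a - 1 - t) * t"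
proof -
  obtain k where k: "t = d + k" using assms(1) le_Suc_ex by blast
  obtain l where l: "a = t + d + 1 + l" using assms(2) le_Suc_ex by blast
  show ?thesis
  proof (cases d)
    case (Suc e)
    have "(a - d) * (d - 1) = (k + e + 2 + l) * e" using k l Suc by simp
    moreover have "(a - 1 - t) * t = (e + 1 + l) * (e + 1 + k)" using k l Suc by simp
    moreover have "(k + e + 2 + l) * e \<le> (e + 1 + l) * (e + 1 + k)" by (simp add: algebra_simps)
    ultimately show ?thesis by simp
  qed simp
qed

text \<open>A non-edge with maximum degree sum is addable: otherwise the neighbourhood of one of its
  ends forces too many non-edges.\<close>

lemma max_degree_sum_non_edge:
  assumes fin: "finite A" "finite B" and card: "card A = card B + 1"
    and minA: "\<forall>v\<in>A. degree_in F B v \<ge> d" and minB: "\<forall>w\<in>B. degree_in F A w \<ge> d"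
    and few: "card (non_edges F A B) < (card A - d) * (d - 1)"
    and xy: "(x, y) \<in> non_edges F A B"
    and max: "\<And>v w. (v, w) \<in> non_edges F A B \<Longrightarrow>
        degree_in F B v + degree_in F A w \<le> degree_in F B x + degree_in F A y"
  shows "degree_in F B x + degree_in F A y \<ge> card A + 1"
proof (rule ccontr)
  let ?t = "degree_in F B x" and ?s = "degree_in F A y"
  assume "\<not> ?thesis"
  then have le: "?t + ?s \<le> card A" by simp
  have x: "x \<in> A" and y: "y \<in> B" using xy by (auto simp: non_edges_def)
  have td: "?t \<ge> d" "?s \<ge> d" using minA minB x y by auto
  show False
  proof (cases "?t + d + 1 \<le> card A")
    case True
    define S where "S = {w\<in>B. {x, w} \<notin> F}"
    have "card S = card B - ?t" using degree_in_plus_non_neighbours[OF fin(2), of F x] by (simp add: S_def)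
    moreover have "\<forall>w\<in>S. ?t \<le> card {v\<in>A. {w, v} \<notin> F}"
    proof
      fix w assume "w \<in> S"
      then have "(x, w) \<in> non_edges F A B" using x by (auto simp: S_def non_edges_def)
      then have "?t + degree_in F A w \<le> card A" using max[of x w] le by simp
      then show "?t \<le> card {v\<in>A. {w, v} \<notin> F}" using degree_in_plus_non_neighbours[OF fin(1), of F w]
        by simp
    qed
    then have "card S * ?t \<le> card (non_edges F A B)"
      using card_mult_le_non_edges(2)[OF fin] by (auto simp: S_def)
    ultimately show False
      using diff_mult_pred_le[OF td(1) True] few card by simp
  next
    case False
    then have sd: "?s = d" using le td by simp
    define S where "S = {v\<in>A. {y, v} \<notin> F}"
    have "card S = card A - d" using degree_in_plus_non_neighbours[OF fin(1), of F y] sd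
      by (simp add: S_def)
    moreover have "\<forall>v\<in>S. d - 1 \<le> card {w\<in>B. {v, w} \<notin> F}"
    proof
      fix v assume "v \<in> S"
      then have "(v, y) \<in> non_edges F A B" using y by (auto simp: S_def non_edges_def insert_commute)
      then have "degree_in F B v + d \<le> card A" using max[of v y] le sd by simp
      then show "d - 1 \<le> card {w\<in>B. {v, w} \<notin> F}"
        using degree_in_plus_non_neighbours[OF fin(2), of F v] card by simp
    qed
    then have "card S * (d - 1) \<le> card (non_edges F A B)"
      using card_mult_le_non_edges(1)[OF fin] by (auto simp: S_def)
    ultimately show False using few by simp
  qed
qed

lemma closure_step_min_degree:
  assumes fin: "finite A" "finite B" and card: "card A = card B + 1"
    and minA: "\<forall>v\<in>A. degree_in F B v \<ge> d" and minB: "\<forall>w\<in>B. degree_in F A w \<ge> d"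
    and few: "card (non_edges F A B) < (card A - d) * (d - 1)"
    and ne: "non_edges F A B \<noteq> {}"
  shows "\<exists>x\<in>A. \<exists>y\<in>B. {x, y} \<notin> F \<and> degree_in F B x + degree_in F A y \<ge> card A + 1 \<and>
     (\<forall>v\<in>A. degree_in (insert {x, y} F) B v \<ge> d) \<and> (\<forall>w\<in>B. degree_in (insert {x, y} F) A w \<ge> d) \<and>
     card (non_edges (insert {x, y} F) A B) < (card A - d) * (d - 1)"
proof -
  define f where "f q = degree_in F B (fst q) + degree_in F A (snd q)" for q
  have finM: "finite (non_edges F A B)" using finite_non_edges[OF fin] .
  have "Max (f ` non_edges F A B) \<in> f ` non_edges F A B" using finM ne by simp
  then obtain q where q: "q \<in> non_edges F A B" "f q = Max (f ` non_edges F A B)" by force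
  obtain x y where "q = (x, y)" by (cases q)
  then have xy: "(x, y) \<in> non_edges F A B" "\<forall>q\<in>non_edges F A B. f q \<le> f (x, y)"
    using q finM by auto
  have "degree_in F B x + degree_in F A y \<ge> card A + 1"
    by (rule max_degree_sum_non_edge[OF fin card minA minB few xy(1)])
      (use xy(2) in \<open>force simp: f_def\<close>)
  moreover have "card (non_edges (insert {x, y} F) A B) \<le> card (non_edges F A B)"
    by (rule card_mono[OF finM]) (auto simp: non_edges_def)
  moreover have "\<forall>v\<in>A. degree_in (insert {x, y} F) B v \<ge> d"
    using minA degree_in_insert_mono[OF fin(2)] le_trans by blast
  moreover have "\<forall>w\<in>B. degree_in (insert {x, y} F) A w \<ge> d"
    using minB degree_in_insert_mono[OF fin(1)] le_trans by blast
  moreover have "x \<in> A" "y \<in> B" "{x, y} \<notin> F" using xy by (auto simp: non_edges_def)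
  moreover note few
  ultimately show ?thesis by (meson le_less_trans)
qed

section \<open>Degrees, non-edges and the spectral radius\<close>

lemma bipartite_graph_edges_between: "bipartite_graph X Y E \<Longrightarrow> edges_between X Y E"
  unfolding bipartite_graph_def edges_between_def by blast

lemma degree_eq_degree_in:
  assumes G: "bipartite_graph X Y E"
  shows "u \<in> X \<Longrightarrow> degree E u = degree_in E Y u" and "u \<in> Y \<Longrightarrow> degree E u = degree_in E X u"
proof -
  have disj: "X \<inter> Y = {}" and bip: "edges_between X Y E"
    using G bipartite_graph_edges_between by (auto simp: bipartite_graph_def)
  show "u \<in> X \<Longrightarrow> degree E u = degree_in E Y u"
  proof -
    assume "u \<in> X"
    then have "{w. {w, u} \<in> E} = {w\<in>Y. {u, w} \<in> E}"
      using edges_between_other_side(1)[OF bip disj, of u] by (auto simp: insert_commute)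
    then show ?thesis by (simp add: degree_def degree_in_def)
  qed
  show "u \<in> Y \<Longrightarrow> degree E u = degree_in E X u"
  proof -
    assume "u \<in> Y"
    then have "{w. {w, u} \<in> E} = {w\<in>X. {u, w} \<in> E}"
      using edges_between_other_side(2)[OF bip disj, of u] by (auto simp: insert_commute)
    then show ?thesis by (simp add: degree_def degree_in_def)
  qed
qed

lemma sum_adj_eq_degree_in: "finite S \<Longrightarrow> (\<Sum>w\<in>S. adj E u w) = real (degree_in E S u)"
  unfolding adj_def degree_in_def by (simp add: sum.If_cases Int_def)

lemma sum_degree_in_plus_non_edges:
  assumes "finite X" "finite Y"
  shows "(\<Sum>u\<in>X. real (degree_in E Y u)) + real (card (non_edges E X Y)) = real (card X) * real (card Y)"
proof -
  have "non_edges E X Y = (SIGMA u:X. {w\<in>Y. {u, w} \<notin> E})" by (auto simp: non_edges_def)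
  then have "card (non_edges E X Y) = (\<Sum>u\<in>X. card {w\<in>Y. {u, w} \<notin> E})" using assms by simp
  then have "(\<Sum>u\<in>X. degree_in E Y u) + card (non_edges E X Y) = (\<Sum>u\<in>X. card Y)"
    using degree_in_plus_non_neighbours[OF assms(2), of E] by (simp add: sum.distrib[symmetric])
  then have "real ((\<Sum>u\<in>X. degree_in E Y u) + card (non_edges E X Y)) = real (card X * card Y)"
    by simp
  then show ?thesis by (simp add: of_nat_sum)
qed

lemma spectral_radius_sq_le_edges:
  assumes G: "bipartite_graph X Y E" and c: "card Y < card X"
  shows "(spectral_radius (X \<union> Y) E)^2 \<le> (\<Sum>u\<in>X. real (degree_in E Y u))"
  using bipartite_adj_eigenvalue_sq_le[OF G spectral_radius_is_adj_eigenvalue[OF G c]] G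
  by (simp add: sum_adj_eq_degree_in bipartite_graph_def)

lemma spectral_radius_sq_eq_edges_imp_complete:
  assumes G: "bipartite_graph X Y E" and c: "card Y < card X"
    and degX: "\<forall>u\<in>X. degree_in E Y u \<ge> 1" and degY: "\<forall>w\<in>Y. degree_in E X w \<ge> 1"
    and equal: "(spectral_radius (X \<union> Y) E)^2 = (\<Sum>u\<in>X. real (degree_in E Y u))"
  shows "non_edges E X Y = {}"
proof -
  have fin: "finite X" "finite Y" using G by (auto simp: bipartite_graph_def)
  have "\<forall>u\<in>X. \<forall>w\<in>Y. {u, w} \<in> E"
    by (rule bipartite_adj_eigenvalue_sq_eq_imp_complete[OF G spectral_radius_is_adj_eigenvalue[OF G c]])
      (use equal degX degY in \<open>simp_all add: sum_adj_eq_degree_in fin\<close>)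
  then show ?thesis by (auto simp: non_edges_def)
qed

lemma non_edges_bound_from_spectral_radius:
  assumes G: "bipartite_graph X Y E" and c: "card Y < card X"
    and degX: "\<forall>u\<in>X. degree_in E Y u \<ge> 1" and degY: "\<forall>w\<in>Y. degree_in E X w \<ge> 1"
    and T: "T \<ge> 0" "sqrt T \<le> spectral_radius (X \<union> Y) E"
  shows "non_edges E X Y = {} \<or> real (card (non_edges E X Y)) < real (card X) * real (card Y) - T"
proof -
  let ?rho = "spectral_radius (X \<union> Y) E" and ?e = "\<Sum>u\<in>X. real (degree_in E Y u)"
  have fin: "finite X" "finite Y" using G by (auto simp: bipartite_graph_def)
  have "sqrt T ^ 2 \<le> ?rho^2" using T by (intro power_mono) auto
  then have "T \<le> ?rho^2" using T by simp
  moreover have "?rho^2 < ?e \<or> non_edges E X Y = {}"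
    using spectral_radius_sq_le_edges[OF G c] spectral_radius_sq_eq_edges_imp_complete[OF G c degX degY]
    by (auto simp: less_eq_real_def)
  ultimately show ?thesis using sum_degree_in_plus_non_edges[OF fin, of E] by auto
qed

section \<open>Deleting a balanced set\<close>

lemma card_balanced_set_parts:
  assumes fin: "finite X" "finite Y" and disj: "X \<inter> Y = {}"
    and W: "W \<subseteq> X \<union> Y" "balanced_set X Y W" "card W = 2 * p"
  shows "card (W \<inter> X) = p" and "card (W \<inter> Y) = p"
proof -
  have "W = (W \<inter> X) \<union> (W \<inter> Y)" using W(1) by auto
  moreover have "(W \<inter> X) \<inter> (W \<inter> Y) = {}" using disj by auto
  ultimately have "card W = card (W \<inter> X) + card (W \<inter> Y)"
    using fin card_Un_disjoint[of "W \<inter> X" "W \<inter> Y"] by simp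
  then show "card (W \<inter> X) = p" "card (W \<inter> Y) = p" using W(2,3) by (auto simp: balanced_set_def)
qed

lemma edges_between_induced:
  assumes "edges_between X Y E"
  shows "edges_between (X - W) (Y - W) (induced_edges E (X \<union> Y - W))"
  unfolding edges_between_def
proof
  fix e assume e: "e \<in> induced_edges E (X \<union> Y - W)"
  then obtain x y where "x \<in> X" "y \<in> Y" "e = {x, y}"
    using assms by (auto simp: induced_edges_def edges_between_def)
  then show "\<exists>x\<in>X - W. \<exists>y\<in>Y - W. e = {x, y}" using e by (auto simp: induced_edges_def)
qed

lemma non_edges_induced_subset:
  "non_edges (induced_edges E (X \<union> Y - W)) (X - W) (Y - W) \<subseteq> non_edges E X Y"
  by (auto simp: non_edges_def induced_edges_def)

lemma degree_in_induced_ge: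
  assumes "finite S" "S \<subseteq> V" "v \<in> V - W"
  shows "degree_in E S v \<le> degree_in (induced_edges E (V - W)) (S - W) v + card (W \<inter> S)"
proof -
  have "{w\<in>S. {v, w} \<in> E} \<subseteq> {w\<in>S - W. {v, w} \<in> induced_edges E (V - W)} \<union> (W \<inter> S)"
    using assms(2,3) unfolding induced_edges_def by blast
  then have "card {w\<in>S. {v, w} \<in> E} \<le> card ({w\<in>S - W. {v, w} \<in> induced_edges E (V - W)} \<union> (W \<inter> S))"
    using assms(1) by (intro card_mono) simp_all
  also have "\<dots> \<le> card {w\<in>S - W. {v, w} \<in> induced_edges E (V - W)} + card (W \<inter> S)"
    by (rule card_Un_le)
  finally show ?thesis unfolding degree_in_def .
qed

lemma delete_balanced_set:
  assumes G: "bipartite_graph X Y E" and card: "card X = card Y + 1"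
    and W: "W \<subseteq> X \<union> Y" "balanced_set X Y W" "card W = 2 * p"
  shows "finite (X - W)" "finite (Y - W)" "(X - W) \<inter> (Y - W) = {}"
    and "card (X - W) = card (Y - W) + 1" "card (X - W) = card X - p"
    and "edges_between (X - W) (Y - W) (induced_edges E (X \<union> Y - W))"
proof -
  have fin: "finite X" "finite Y" and disj: "X \<inter> Y = {}" using G by (auto simp: bipartite_graph_def)
  show "finite (X - W)" "finite (Y - W)" "(X - W) \<inter> (Y - W) = {}" using fin disj by auto
  note parts = card_balanced_set_parts[OF fin disj W]
  have "p \<le> card Y" using parts(2) fin card_mono[of Y "W \<inter> Y"] by auto
  moreover have "card (X - W) = card X - p" "card (Y - W) = card Y - p"
    using fin parts by (simp_all add: card_Diff_subset_Int Int_commute)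
  ultimately show "card (X - W) = card (Y - W) + 1" "card (X - W) = card X - p" using card by simp_all
  show "edges_between (X - W) (Y - W) (induced_edges E (X \<union> Y - W))"
    using bipartite_graph_edges_between[OF G] by (rule edges_between_induced)
qed

lemma ham_biconnected_2p_if_few_non_edges:
  assumes G: "bipartite_graph X Y E" and card: "card X = card Y + 1"
    and few: "card (non_edges E X Y) + p + 3 \<le> card X"
  shows "ham_biconnected_2p p X Y E"
  unfolding ham_biconnected_2p_def
proof (intro allI impI)
  fix W assume W: "W \<subseteq> X \<union> Y" "balanced_set X Y W" "card W = 2 * p"
  note D = delete_balanced_set[OF G card W]
  let ?A = "X - W" and ?B = "Y - W" and ?F = "induced_edges E (X \<union> Y - W)"
  have "card (non_edges ?F ?A ?B) \<le> card (non_edges E X Y)"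
    using G by (intro card_mono finite_non_edges non_edges_induced_subset) (auto simp: bipartite_graph_def)
  then have "card (non_edges ?F ?A ?B) + 3 \<le> card ?A" using few D(5) by linarith
  then show "ham_biconnected ?A ?B ?F"
    using ham_biconnected_by_closure[where P = "\<lambda>F. card (non_edges F (X - W) (Y - W)) + 3 \<le> card (X - W)",
        OF D(1-4) closure_step_few_non_edges[OF D(1,2,4)] D(6)] by blast
qed

lemma ham_biconnected_2p_if_min_degree:
  assumes G: "bipartite_graph X Y E" and card: "card X = card Y + 1"
    and minX: "\<forall>u\<in>X. degree_in E Y u \<ge> k" and minY: "\<forall>w\<in>Y. degree_in E X w \<ge> k"
    and few: "card (non_edges E X Y) < (card X - k) * (k - p - 1)"
  shows "ham_biconnected_2p p X Y E"
  unfolding ham_biconnected_2p_def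
proof (intro allI impI)
  fix W assume W: "W \<subseteq> X \<union> Y" "balanced_set X Y W" "card W = 2 * p"
  have fin: "finite X" "finite Y" and disj: "X \<inter> Y = {}" using G by (auto simp: bipartite_graph_def)
  note D = delete_balanced_set[OF G card W]
  note parts = card_balanced_set_parts[OF fin disj W]
  let ?A = "X - W" and ?B = "Y - W" and ?F = "induced_edges E (X \<union> Y - W)" and ?d = "k - p"
  have "p < k" using few by (cases "p < k") auto
  have "\<forall>u\<in>?A. degree_in ?F ?B u \<ge> ?d"
  proof
    fix u assume "u \<in> ?A"
    then have "degree_in E Y u \<le> degree_in ?F ?B u + p"
      using degree_in_induced_ge[OF fin(2), of "X \<union> Y" u W E] parts(2) by auto
    then show "degree_in ?F ?B u \<ge> ?d" using minX \<open>u \<in> ?A\<close> by force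
  qed
  moreover have "\<forall>w\<in>?B. degree_in ?F ?A w \<ge> ?d"
  proof
    fix w assume "w \<in> ?B"
    then have "degree_in E X w \<le> degree_in ?F ?A w + p"
      using degree_in_induced_ge[OF fin(1), of "X \<union> Y" w W E] parts(1) by auto
    then show "degree_in ?F ?A w \<ge> ?d" using minY \<open>w \<in> ?B\<close> by force
  qed
  moreover have "card (non_edges ?F ?A ?B) \<le> card (non_edges E X Y)"
    using fin by (intro card_mono finite_non_edges non_edges_induced_subset)
  then have "card (non_edges ?F ?A ?B) < (card ?A - ?d) * (?d - 1)"
    using few D(5) \<open>p < k\<close> by (simp add: diff_diff_add)
  ultimately show "ham_biconnected ?A ?B ?F"
    using ham_biconnected_by_closure[where P = "\<lambda>F. (\<forall>u\<in>X - W. degree_in F (Y - W) u \<ge> k - p)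
        \<and> (\<forall>w\<in>Y - W. degree_in F (X - W) w \<ge> k - p)
        \<and> card (non_edges F (X - W) (Y - W)) < (card (X - W) - (k - p)) * (k - p - 1)",
        OF D(1-4) closure_step_min_degree[OF D(1,2,4)] D(6)] by blast
qed

section \<open>The spectral conditions\<close>

lemma ham_biconnected_2p_spectral_i:
  assumes G: "bipartite_graph X Y E" and cX: "card X = n" and cY: "card Y + 1 = n"
    and minX: "\<forall>u\<in>X. degree_in E Y u \<ge> k" and minY: "\<forall>w\<in>Y. degree_in E X w \<ge> k"
    and k: "k = p + 1" and n: "2 * k + 3 \<le> n"
    and rho: "sqrt ((real n - 1)^2 + real k) \<le> spectral_radius (X \<union> Y) E"
  shows "ham_biconnected_2p p X Y E"
proof -
  let ?m = "card (non_edges E X Y)"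
  have "card Y < card X" "real (card Y) = real n - 1" using cX cY by auto
  moreover have "\<forall>u\<in>X. degree_in E Y u \<ge> 1" "\<forall>w\<in>Y. degree_in E X w \<ge> 1" using minX minY k by auto
  ultimately have "?m = 0 \<or> real ?m < real n * (real n - 1) - ((real n - 1)^2 + real k)"
    using non_edges_bound_from_spectral_radius[OF G _ _ _ _ rho] cX by auto
  moreover have "real n * (real n - 1) - ((real n - 1)^2 + real k) = real n - 1 - real k"
    by (simp add: power2_eq_square algebra_simps)
  ultimately have "?m + p + 3 \<le> card X" using k n cX by auto
  then show ?thesis using ham_biconnected_2p_if_few_non_edges[OF G] cX cY by simp
qed

lemma ham_biconnected_2p_spectral_ii:
  assumes G: "bipartite_graph X Y E" and cX: "card X = n" and cY: "card Y + 1 = n"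
    and minX: "\<forall>u\<in>X. degree_in E Y u \<ge> k" and minY: "\<forall>w\<in>Y. degree_in E X w \<ge> k"
    and k: "p + 2 \<le> k" and n: "real ((k + 2) * (k - p + 1)) / 2 \<le> real n"
    and rho: "sqrt (real n * (real n - real k + real p) + real k * (real k - real p - 1))
      \<le> spectral_radius (X \<union> Y) E"
  shows "ham_biconnected_2p p X Y E"
proof -
  let ?m = "card (non_edges E X Y)"
  have "(k + 2) * 3 \<le> (k + 2) * (k - p + 1)" using k by (intro mult_le_mono2) linarith
  moreover have "real ((k + 2) * (k - p + 1)) \<le> real (2 * n)" using n by simp
  ultimately have "(k + 2) * 3 \<le> 2 * n" by (simp only: of_nat_le_iff)
  then have "3 * k + 6 \<le> 2 * n" by simp
  then have "k < n" by linarith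
  have "card Y < card X" "real (card Y) = real n - 1" using cX cY by auto
  moreover have "\<forall>u\<in>X. degree_in E Y u \<ge> 1" "\<forall>w\<in>Y. degree_in E X w \<ge> 1" using minX minY k by auto
  moreover have "real n * (real n - real k + real p) + real k * (real k - real p - 1) \<ge> 0"
    using \<open>k < n\<close> k by (intro add_nonneg_nonneg mult_nonneg_nonneg) auto
  ultimately have "?m = 0 \<or> real ?m < real n * (real n - 1)
      - (real n * (real n - real k + real p) + real k * (real k - real p - 1))"
    using non_edges_bound_from_spectral_radius[OF G _ _ _ _ rho] cX by auto
  moreover have "real n * (real n - 1) - (real n * (real n - real k + real p) + real k * (real k - real p - 1))
      = (real n - real k) * (real k - real p - 1)"
    by (simp add: algebra_simps)
  moreover have "(real n - real k) * (real k - real p - 1) = real ((n - k) * (k - p - 1))"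
    using \<open>k < n\<close> k by (simp add: of_nat_diff)
  moreover have "0 < (n - k) * (k - p - 1)" using \<open>k < n\<close> k by simp
  ultimately have "?m < (card X - k) * (k - p - 1)" using cX by (auto simp del: of_nat_mult)
  then show ?thesis using ham_biconnected_2p_if_min_degree[OF G _ minX minY] cX cY by simp
qed

theorem corollary5p3:
  fixes X Y :: "'a set" and E :: "'a set set" and p k n :: nat
  assumes G: "bipartite_graph X Y E"
    and nb: "nearly_balanced X Y"
    and ord: "card (X \<union> Y) = 2 * n - 1"
    and deg: "min_degree_ge (X \<union> Y) E k"
  shows
    "(k = p + 1 \<and> n \<ge> 2 * k + 3 \<and>
        spectral_radius (X \<union> Y) E \<ge> sqrt ((real n - 1)^2 + real k)
       \<longrightarrow> ham_biconnected_2p p X Y E)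
     \<and>
     (k \<ge> p + 2 \<and> real n \<ge> real ((k + 2) * (k - p + 1)) / 2 \<and>
        spectral_radius (X \<union> Y) E \<ge>
          sqrt (real n * (real n - real k + real p) + real k * (real k - real p - 1))
       \<longrightarrow> ham_biconnected_2p p X Y E)"
proof -
  have "card (X \<union> Y) = card X + card Y"
    using G by (simp add: bipartite_graph_def card_Un_disjoint)
  then have cX: "card X = n" and cY: "card Y + 1 = n"
    using nb ord by (auto simp: nearly_balanced_def)
  have minX: "\<forall>u\<in>X. degree_in E Y u \<ge> k"
    using deg degree_eq_degree_in(1)[OF G] unfolding min_degree_ge_def by (metis UnI1)
  have minY: "\<forall>w\<in>Y. degree_in E X w \<ge> k"
    using deg degree_eq_degree_in(2)[OF G] unfolding min_degree_ge_def by (metis UnI2)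
  show ?thesis
    using ham_biconnected_2p_spectral_i[OF G cX cY minX minY]
      ham_biconnected_2p_spectral_ii[OF G cX cY minX minY] by blast
qed

end
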